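(* Let $n\ge 1$, let $a_1<a_2$ be constants, and let $f$ be continuous on $(0,\infty)$ with $f(t)\to 0$ as $t\to\infty$. Assume that for every constant $c\in[a_1,a_2]$, every nontrivial solution of $y''+\frac{n-1}{t}y'+\frac{c}{t^2}y=0$ has infinitely many roots (in $(T,\infty)$ for every $T>0$). Then for every constant $a\in(a_1,a_2)$, every nontrivial solution of \[ y''+\frac{n-1}{t}y'+\frac{a+f(t)}{t^2}y=0 \] has infinitely many roots (in $(T,\infty)$ for every $T>0$). *)

theory Defs
  imports Complex_Main
begin

definition is_solution :: "nat \<Rightarrow> (real \<Rightarrow> real) \<Rightarrow> (real \<Rightarrow> real) \<Rightarrow> bool" where
  "is_solution n q y \<longleftrightarrow>
     (\<exists>y' y''. \<forall>t>0. (y has_real_derivative y' t) (at t)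
                    \<and> (y' has_real_derivative y'' t) (at t)
                    \<and> y'' t + (real n - 1) / t * y' t + q t / t\<^sup>2 * y t = 0)"

definition nontrivial :: "(real \<Rightarrow> real) \<Rightarrow> bool" where
  "nontrivial y \<longleftrightarrow> (\<exists>t>0. y t \<noteq> 0)"

definition oscillatory :: "(real \<Rightarrow> real) \<Rightarrow> bool" where
  "oscillatory y \<longleftrightarrow> (\<forall>T>0. infinite {t. T < t \<and> y t = 0})"

end

theory Submission
  imports Defs
begin

text \<open>
  Put \<open>m = (n - 2)/2\<close>. The Euler equation \<open>y'' + (n - 1)/t y' + c/t\<^sup>2 y = 0\<close> has the
  solutions \<open>t powr r\<close> with \<open>r\<^sup>2 + (n - 2) r + c = 0\<close>; for \<open>c \<le> m\<^sup>2\<close> such a root is real and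
  gives a positive solution, so the oscillation hypothesis at \<open>c = a\<^sub>1\<close> forces \<open>m\<^sup>2 < a\<^sub>1\<close>.
  For \<open>c = m\<^sup>2 + b\<^sup>2\<close> with \<open>b > 0\<close> the Euler equation has the solution
  \<open>t powr (-m) * sin (b ln t)\<close>, with zeros arbitrarily far out. Since \<open>f \<longlongrightarrow> 0\<close>, eventually
  \<open>a + f t > a\<^sub>1\<close>, and Sturm comparison with this solution at \<open>c = a\<^sub>1\<close> puts a zero of every
  solution of the perturbed equation between any two consecutive zeros of it.
\<close>

text \<open>The weight \<open>t powr k\<close> makes the first-order terms cancel (Picone's identity).\<close>

lemma has_real_derivative_weighted_wronskian:
  fixes k :: real
  assumes t: "0 < t"
    and du: "(u has_real_derivative u' t) (at t)" and du': "(u' has_real_derivative u'' t) (at t)"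
    and dy: "(y has_real_derivative y' t) (at t)" and dy': "(y' has_real_derivative y'' t) (at t)"
    and equ: "u'' t + k / t * u' t + p t / t\<^sup>2 * u t = 0"
    and eqy: "y'' t + k / t * y' t + q t / t\<^sup>2 * y t = 0"
  shows "((\<lambda>s. s powr k * (u s * y' s - y s * u' s)) has_real_derivative
           t powr k * (p t - q t) / t\<^sup>2 * u t * y t) (at t)"
proof -
  have "((\<lambda>s. s powr k * (u s * y' s - y s * u' s)) has_real_derivative
      k * t powr (k - 1) * (u t * y' t - y t * u' t) + t powr k * (u t * y'' t - y t * u'' t)) (at t)"
    by (rule derivative_eq_intros du du' dy dy' t refl)+ (simp add: algebra_simps)
  moreover have "k * t powr (k - 1) * (u t * y' t - y t * u' t) + t powr k * (u t * y'' t - y t * u'' t)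
      = t powr k * (p t - q t) / t\<^sup>2 * u t * y t"
  proof -
    have u'': "u'' t = - (k / t * u' t) - p t / t\<^sup>2 * u t"
      and y'': "y'' t = - (k / t * y' t) - q t / t\<^sup>2 * y t"
      using equ eqy by linarith+
    have "t powr (k - 1) = t powr k / t" using t by (simp add: powr_diff)
    then show ?thesis unfolding u'' y'' using t by (simp add: field_simps power2_eq_square)
  qed
  ultimately show ?thesis by simp
qed

lemma has_real_derivative_nonneg_if_min_on_right:
  assumes "(f has_real_derivative l) (at a)" "a < b" "\<forall>t\<in>{a<..<b}. f a \<le> f t"
  shows "0 \<le> l"
proof (rule ccontr)
  assume "\<not> 0 \<le> l"
  then obtain d where "d > 0" and d: "\<forall>h>0. h < d \<longrightarrow> f (a + h) < f a"
    using DERIV_neg_dec_right[OF assms(1)] by force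
  define h where "h = min d (b - a) / 2"
  have "0 < h" "h < d" "h < b - a" using \<open>d > 0\<close> assms(2) by (auto simp: h_def)
  then have "f (a + h) < f a" "a + h \<in> {a<..<b}" using d by auto
  with assms(3) show False by fastforce
qed

lemma has_real_derivative_nonpos_if_min_on_left:
  assumes "(f has_real_derivative l) (at b)" "a < b" "\<forall>t\<in>{a<..<b}. f b \<le> f t"
  shows "l \<le> 0"
proof (rule ccontr)
  assume "\<not> l \<le> 0"
  then obtain d where "d > 0" and d: "\<forall>h>0. h < d \<longrightarrow> f (b - h) < f b"
    using DERIV_pos_inc_left[OF assms(1)] by force
  define h where "h = min d (b - a) / 2"
  have "0 < h" "h < d" "h < b - a" using \<open>d > 0\<close> assms(2) by (auto simp: h_def)
  then have "f (b - h) < f b" "b - h \<in> {a<..<b}" using d by auto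
  with assms(3) show False by fastforce
qed

lemma sturm_comparison:
  assumes u: "is_solution n p u" and y: "is_solution n q y"
    and t12: "0 < t1" "t1 < t2" and zeros: "u t1 = 0" "u t2 = 0"
    and between: "\<forall>t\<in>{t1<..<t2}. 0 < u t \<and> p t < q t"
  shows "\<exists>t\<in>{t1..t2}. y t \<le> 0"
proof (rule ccontr)
  assume "\<not> ?thesis"
  then have ypos: "\<forall>t\<in>{t1..t2}. 0 < y t" by force
  obtain u' u'' where u_sol: "\<forall>t>0. (u has_real_derivative u' t) (at t) \<and> (u' has_real_derivative u'' t) (at t)
      \<and> u'' t + (real n - 1) / t * u' t + p t / t\<^sup>2 * u t = 0"
    using u unfolding is_solution_def by blast
  obtain y' y'' where y_sol: "\<forall>t>0. (y has_real_derivative y' t) (at t) \<and> (y' has_real_derivative y'' t) (at t)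
      \<and> y'' t + (real n - 1) / t * y' t + q t / t\<^sup>2 * y t = 0"
    using y unfolding is_solution_def by blast
  define k where "k = real n - 1"
  define W where "W s = s powr k * (u s * y' s - y s * u' s)" for s
  define W' where "W' s = s powr k * (p s - q s) / s\<^sup>2 * u s * y s" for s
  have "(W has_real_derivative W' t) (at t)" if "t1 \<le> t" for t
    unfolding W_def[abs_def] W'_def
    using u_sol y_sol t12 that
    by (intro has_real_derivative_weighted_wronskian[where u'' = u'' and y'' = y'']) (auto simp: k_def)
  then obtain z where z: "t1 < z" "z < t2" and mvt: "W t2 - W t1 = (t2 - t1) * W' z"
    using MVT2[OF t12(2), of W W'] by blast
  have "0 < u z" "0 < y z" "p z < q z" "0 < z"
    using z t12 between ypos by auto
  then have "W' z < 0"
    unfolding W'_def by (simp add: mult_less_0_iff divide_less_0_iff)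
  with t12 have "(t2 - t1) * W' z < 0" by (simp add: mult_pos_neg)
  with mvt have "W t2 < W t1" by linarith
  moreover have "0 < y t1" "0 < y t2" using ypos t12 by auto
  moreover have "0 \<le> u' t1"
    using u_sol t12 zeros between by (intro has_real_derivative_nonneg_if_min_on_right[of u _ t1 t2]) auto
  then have "W t1 \<le> 0"
    unfolding W_def using zeros \<open>0 < y t1\<close> by simp
  moreover have "u' t2 \<le> 0"
    using u_sol t12 zeros between by (intro has_real_derivative_nonpos_if_min_on_left[of u _ t2 t1]) auto
  then have "0 \<le> W t2"
    unfolding W_def using zeros \<open>0 < y t2\<close> by (simp add: mult_nonneg_nonpos)
  ultimately show False by linarith
qed

lemma is_solution_euler_power:
  assumes "r\<^sup>2 + (real n - 2) * r + c = 0"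
  shows "is_solution n (\<lambda>_. c) (\<lambda>t. t powr r)"
  unfolding is_solution_def
proof (intro exI allI impI conjI)
  fix t :: real assume t: "0 < t"
  show "((\<lambda>t. t powr r) has_real_derivative r * t powr (r - 1)) (at t)"
    using t by (intro derivative_eq_intros) auto
  show "((\<lambda>t. r * t powr (r - 1)) has_real_derivative r * ((r - 1) * t powr (r - 2))) (at t)"
    using t by (intro derivative_eq_intros) (auto simp: diff_diff_eq)
  have "t powr (r - 1) = t powr r / t" "t powr (r - 2) = t powr r / t\<^sup>2"
    using t by (simp_all add: powr_diff)
  then have "r * ((r - 1) * t powr (r - 2)) + (real n - 1) / t * (r * t powr (r - 1)) + c / t\<^sup>2 * t powr r
      = t powr r / t\<^sup>2 * (r\<^sup>2 + (real n - 2) * r + c)"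
    using t by (simp add: field_simps power2_eq_square)
  with assms show "r * ((r - 1) * t powr (r - 2)) + (real n - 1) / t * (r * t powr (r - 1)) + c / t\<^sup>2 * t powr r = 0"
    by simp
qed

lemma is_solution_euler_oscillating:
  assumes m: "m = (real n - 2) / 2"
  shows "is_solution n (\<lambda>_. m\<^sup>2 + b\<^sup>2) (\<lambda>t. t powr (- m) * sin (b * ln t))"
  unfolding is_solution_def
proof (intro exI allI impI conjI)
  fix t :: real assume t: "0 < t"
  have p1: "t powr (- m - 1) = t powr (- m) / t" and p2: "t powr (- m - 2) = t powr (- m) / t\<^sup>2"
    using t by (simp_all add: powr_diff)
  have k: "real n - 1 = 2 * m + 1" using m by simp
  show "((\<lambda>t. t powr (- m) * sin (b * ln t)) has_real_derivative
      t powr (- m - 1) * (b * cos (b * ln t) - m * sin (b * ln t))) (at t)"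
    using t by (auto intro!: derivative_eq_intros simp: p1 field_simps)
  show "((\<lambda>t. t powr (- m - 1) * (b * cos (b * ln t) - m * sin (b * ln t))) has_real_derivative
      t powr (- m - 2) * ((m\<^sup>2 + m - b\<^sup>2) * sin (b * ln t) - (2 * m + 1) * b * cos (b * ln t))) (at t)"
    using t by (auto intro!: derivative_eq_intros simp: p1 p2 field_simps power2_eq_square)
  show "t powr (- m - 2) * ((m\<^sup>2 + m - b\<^sup>2) * sin (b * ln t) - (2 * m + 1) * b * cos (b * ln t))
      + (real n - 1) / t * (t powr (- m - 1) * (b * cos (b * ln t) - m * sin (b * ln t)))
      + (m\<^sup>2 + b\<^sup>2) / t\<^sup>2 * (t powr (- m) * sin (b * ln t)) = 0"
    using t unfolding p1 p2 k by (simp add: field_simps power2_eq_square)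
qed

lemma sin_ln_positive_between_zeros:
  fixes b T :: real
  assumes "0 < b"
  obtains t1 t2 where "T < t1" "t1 < t2" "sin (b * ln t1) = 0" "sin (b * ln t2) = 0"
    "\<forall>t\<in>{t1<..<t2}. 0 < sin (b * ln t)"
proof -
  obtain j :: nat where j: "b * ln (max T 1) / (2 * pi) < real j" using reals_Archimedean2 by blast
  define t1 where "t1 = exp (real (2 * j) * pi / b)"
  define t2 where "t2 = exp ((real (2 * j) * pi + pi) / b)"
  have lt1: "b * ln t1 = real (2 * j) * pi" and lt2: "b * ln t2 = real (2 * j) * pi + pi"
    using assms by (simp_all add: t1_def t2_def)
  have "b * ln (max T 1) < real (2 * j) * pi" using j by (simp add: pos_divide_less_eq algebra_simps)
  then have "ln (max T 1) < real (2 * j) * pi / b" using assms by (simp add: pos_less_divide_eq mult.commute)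
  then have "exp (ln (max T 1)) < t1" unfolding t1_def by (rule exp_less_mono)
  then have "T < t1" by simp
  moreover have "t1 < t2" using assms by (simp add: t1_def t2_def divide_strict_right_mono)
  moreover have "sin (b * ln t1) = 0" "sin (b * ln t2) = 0"
    unfolding lt1 lt2 by (simp_all add: sin_npi sin_add)
  moreover have "0 < sin (b * ln t)" if "t1 < t" "t < t2" for t
  proof -
    have "0 < t1" by (simp add: t1_def)
    with that assms have "b * ln t1 < b * ln t" "b * ln t < b * ln t2" by auto
    then have "0 < b * ln t - real (2 * j) * pi" "b * ln t - real (2 * j) * pi < pi"
      unfolding lt1 lt2 by linarith+
    then have "0 < sin (b * ln t - real (2 * j) * pi)" by (rule sin_gt_zero)
    then show ?thesis by (simp add: sin_diff sin_npi cos_npi)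
  qed
  ultimately show ?thesis using that by simp
qed

lemma is_solution_uminus:
  assumes "is_solution n q y"
  shows "is_solution n q (\<lambda>t. - y t)"
proof -
  obtain y' y'' where sol: "\<forall>t>0. (y has_real_derivative y' t) (at t) \<and> (y' has_real_derivative y'' t) (at t)
      \<and> y'' t + (real n - 1) / t * y' t + q t / t\<^sup>2 * y t = 0"
    using assms unfolding is_solution_def by blast
  have "((\<lambda>t. - y t) has_real_derivative - y' t) (at t)
      \<and> ((\<lambda>t. - y' t) has_real_derivative - y'' t) (at t)
      \<and> - y'' t + (real n - 1) / t * - y' t + q t / t\<^sup>2 * - y t = 0" if "0 < t" for t
  proof -
    have "y'' t + (real n - 1) / t * y' t + q t / t\<^sup>2 * y t = 0" using sol that by blast
    then show ?thesis using sol that by (auto intro: DERIV_minus)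
  qed
  then show ?thesis
    unfolding is_solution_def by (intro exI[of _ "\<lambda>t. - y' t"] exI[of _ "\<lambda>t. - y'' t"]) simp
qed

lemma is_solution_imp_isCont:
  assumes "is_solution n q y" "0 < t"
  shows "isCont y t"
  using assms DERIV_isCont unfolding is_solution_def by blast

lemma not_oscillatory_imp_eventually_sign:
  assumes cont: "\<And>t. 0 < t \<Longrightarrow> isCont y t" and "\<not> oscillatory y"
  obtains T where "(\<forall>t>T. 0 < y t) \<or> (\<forall>t>T. y t < 0)"
proof -
  obtain T where T: "0 < T" and fin: "finite {t. T < t \<and> y t = 0}"
    using assms(2) unfolding oscillatory_def by blast
  define T0 where "T0 = Max (insert T {t. T < t \<and> y t = 0})"
  have "T \<le> T0" unfolding T0_def using fin by simp
  have nonzero: "y t \<noteq> 0" if "T0 < t" for t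
    using that fin \<open>T \<le> T0\<close> Max_ge[of "insert T {t. T < t \<and> y t = 0}" t] unfolding T0_def by force
  have "(\<forall>t>T0. 0 < y t) \<or> (\<forall>t>T0. y t < 0)"
  proof (rule ccontr)
    assume "\<not> ?thesis"
    then obtain p q where p: "T0 < p" "y p < 0" and q: "T0 < q" "y q > 0"
      using nonzero by (meson linorder_neqE_linordered_idom)
    have "\<forall>x. min p q \<le> x \<and> x \<le> max p q \<longrightarrow> isCont y x"
      using cont T \<open>T \<le> T0\<close> p q by auto
    then obtain x where "min p q \<le> x" "x \<le> max p q" "y x = 0"
      using IVT[of y p 0 q] IVT2[of y p 0 q] p q by (cases "p \<le> q") auto
    with nonzero p q show False by (metis min_less_iff_conj less_le_trans)
  qed
  with that show ?thesis by blast
qed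

lemma euler_equation_has_nonoscillatory_solution:
  assumes "c \<le> ((real n - 2) / 2)\<^sup>2"
  shows "\<exists>y. is_solution n (\<lambda>_. c) y \<and> nontrivial y \<and> \<not> oscillatory y"
proof -
  define m where "m = (real n - 2) / 2"
  define r where "r = - m + sqrt (m\<^sup>2 - c)"
  have "(r + m)\<^sup>2 = m\<^sup>2 - c" using assms by (simp add: r_def m_def)
  then have "r\<^sup>2 + 2 * m * r + c = 0" by (simp add: power2_eq_square algebra_simps)
  moreover have "2 * m = real n - 2" by (simp add: m_def)
  ultimately have "r\<^sup>2 + (real n - 2) * r + c = 0" by simp
  then have "is_solution n (\<lambda>_. c) (\<lambda>t. t powr r)" by (rule is_solution_euler_power)
  moreover have "nontrivial (\<lambda>t. t powr r)" unfolding nontrivial_def by (intro exI[of _ 1]) simp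
  moreover have "\<not> oscillatory (\<lambda>t. t powr r)" unfolding oscillatory_def by (auto intro!: exI[of _ 1])
  ultimately show ?thesis by blast
qed

lemma not_eventually_positive_if_above_euler:
  assumes y: "is_solution n q y" and "0 < b"
    and above: "\<forall>t>T. ((real n - 2) / 2)\<^sup>2 + b\<^sup>2 < q t"
  shows "\<exists>t>T. y t \<le> 0"
proof -
  define m where "m = (real n - 2) / 2"
  obtain t1 t2 where t12: "max T 0 < t1" "t1 < t2" and zeros: "sin (b * ln t1) = 0" "sin (b * ln t2) = 0"
    and arch: "\<forall>t\<in>{t1<..<t2}. 0 < sin (b * ln t)"
    using sin_ln_positive_between_zeros[OF \<open>0 < b\<close>] by metis
  have "\<exists>t\<in>{t1..t2}. y t \<le> 0"
  proof (rule sturm_comparison[OF is_solution_euler_oscillating[OF m_def] y])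
    show "\<forall>t\<in>{t1<..<t2}. 0 < t powr - m * sin (b * ln t) \<and> m\<^sup>2 + b\<^sup>2 < q t"
      using arch above t12 by (auto simp: m_def)
  qed (use t12 zeros in auto)
  then obtain t where "t1 \<le> t" "y t \<le> 0" by auto
  with t12 show ?thesis by (intro exI[of _ t]) auto
qed

lemma oscillatory_if_eventually_above_critical:
  assumes y: "is_solution n q y" and crit: "((real n - 2) / 2)\<^sup>2 < c"
    and "\<forall>\<^sub>F t in at_top. c < q t"
  shows "oscillatory y"
proof (rule ccontr)
  assume "\<not> oscillatory y"
  then obtain T where sign: "(\<forall>t>T. 0 < y t) \<or> (\<forall>t>T. y t < 0)"
    using not_oscillatory_imp_eventually_sign is_solution_imp_isCont y by metis
  obtain N where "\<forall>t>N. c < q t"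
    using assms(3) unfolding eventually_at_top_dense by blast
  define b where "b = sqrt (c - ((real n - 2) / 2)\<^sup>2)"
  have "0 < b" and "c = ((real n - 2) / 2)\<^sup>2 + b\<^sup>2" using crit by (simp_all add: b_def)
  with \<open>\<forall>t>N. c < q t\<close> have above: "\<forall>t>max T N. ((real n - 2) / 2)\<^sup>2 + b\<^sup>2 < q t" by simp
  obtain t where "max T N < t" "y t \<le> 0"
    using not_eventually_positive_if_above_euler[OF y \<open>0 < b\<close> above] by blast
  moreover obtain s where "max T N < s" "- y s \<le> 0"
    using not_eventually_positive_if_above_euler[OF is_solution_uminus[OF y] \<open>0 < b\<close> above] by blast
  ultimately show False using sign by force
qed

theorem lemma3p3:
  fixes n :: nat and a1 a2 :: real and f :: "real \<Rightarrow> real"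
  assumes "n \<ge> 1" and "a1 < a2"
    and "continuous_on {0<..} f"
    and "(f \<longlongrightarrow> 0) at_top"
    and "\<forall>c\<in>{a1..a2}. \<forall>y. is_solution n (\<lambda>_. c) y \<and> nontrivial y \<longrightarrow> oscillatory y"
  shows "\<forall>a\<in>{a1<..<a2}. \<forall>y. is_solution n (\<lambda>t. a + f t) y \<and> nontrivial y \<longrightarrow> oscillatory y"
proof (intro ballI allI impI)
  fix a y assume a: "a \<in> {a1<..<a2}" and y: "is_solution n (\<lambda>t. a + f t) y \<and> nontrivial y"
  have "((real n - 2) / 2)\<^sup>2 < a1"
    using euler_equation_has_nonoscillatory_solution[of a1 n] assms(2,5) by force
  moreover have "\<forall>\<^sub>F t in at_top. a1 < a + f t"
    using order_tendstoD(1)[OF assms(4), of "a1 - a"] a by (auto elim: eventually_mono)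
  ultimately show "oscillatory y"
    using oscillatory_if_eventually_above_critical y by blast
qed

end
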